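(* Let $n\geq 2$ and $m=\lfloor n/2\rfloor$. For every future-directed null vector $\zeta\in\mathbb{R}^{n,1}$ there exists $a\in\mathbb{C}^{2^m}$ with $\zeta=\zeta_a$, where $$\zeta_a=\sum_{j=1}^n\langle\sqrt{-1}\,c(e_j)a,a\rangle e_j+|a|^2e_0 .$$
   Context: $\mathbb{R}^{n,1}$ is Minkowski space with orthonormal basis $e_0=\partial/\partial t$, $e_j=\partial/\partial x_j$ ($1\le j\le n$) and metric $\sum dx_j^2-dt^2$; a future-directed null vector is a nonzero $\zeta$ with $\zeta\cdot\zeta=0$ and positive $e_0$-component. $\langle\cdot,\cdot\rangle$ is the standard Hermitian inner product on $\mathbb{C}^{2^m}$. The $c(e_j)$ are Baum's Clifford matrices: with $g_1=\begin{pmatrix}\sqrt{-1}&0\\0&-\sqrt{-1}\end{pmatrix}$, $g_2=\begin{pmatrix}0&\sqrt{-1}\\\sqrt{-1}&0\end{pmatrix}$, $T=\begin{pmatrix}0&-\sqrt{-1}\\\sqrt{-1}&0\end{pmatrix}$, $E=I_2$, set $c(e_{2j-1})=E\otimes\cdots\otimes E\otimes g_1\otimes T\otimes\cdots\otimes T$, $c(e_{2j})=E\otimes\cdots\otimes E\otimes g_2\otimes T\otimes\cdots\otimes T$ for $1\le j\le m$ ($j-1$ factors $E$, $m$ factors in total), and, if $n=2m+1$, $c(e_n)=\sqrt{-1}\,T\otimes\cdots\otimes T$ ($m$ factors). (For $n=3$ these are $g_1,g_2,\sqrt{-1}T$; for $n=2$ they are $g_1,g_2$.) *)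

theory Defs
  imports Complex_Main
begin

text \<open>Square complex matrices of size d are represented as functions nat \<Rightarrow> nat \<Rightarrow> complex,
  with only the entries with indices below d being relevant; vectors in C^d as
  functions nat \<Rightarrow> complex, only indices below d relevant.\<close>

type_synonym cmat = "nat \<Rightarrow> nat \<Rightarrow> complex"
type_synonym cvec = "nat \<Rightarrow> complex"

definition mat2 :: "complex \<Rightarrow> complex \<Rightarrow> complex \<Rightarrow> complex \<Rightarrow> cmat" where
  "mat2 a b c d = (\<lambda>i j. if i = 0 \<and> j = 0 then a else if i = 0 \<and> j = 1 then b
                          else if i = 1 \<and> j = 0 then c else if i = 1 \<and> j = 1 then d else 0)"

definition g1 :: cmat where "g1 = mat2 \<i> 0 0 (-\<i>)"
definition g2 :: cmat where "g2 = mat2 0 \<i> \<i> 0"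
definition Tm :: cmat where "Tm = mat2 0 (-\<i>) \<i> 0"
definition Em :: cmat where "Em = mat2 1 0 0 1"

definition kron :: "nat \<Rightarrow> cmat \<Rightarrow> cmat \<Rightarrow> cmat" where
  "kron q A B = (\<lambda>i j. A (i div q) (j div q) * B (i mod q) (j mod q))"

fun tensor_list :: "cmat list \<Rightarrow> cmat" where
  "tensor_list [] = (\<lambda>i j. if i = 0 \<and> j = 0 then 1 else 0)"
| "tensor_list (A # As) = kron (2 ^ length As) A (tensor_list As)"

text \<open>Baum's Clifford matrices c(e_j), 1 \<le> j \<le> n, of size 2^m with m = n div 2.\<close>
definition cliff :: "nat \<Rightarrow> nat \<Rightarrow> cmat" where
  "cliff n j = (let m = n div 2 in
     if odd n \<and> j = n then (\<lambda>a b. \<i> * tensor_list (replicate m Tm) a b)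
     else if odd j then
       tensor_list (replicate ((j + 1) div 2 - 1) Em @ [g1] @ replicate (m - (j + 1) div 2) Tm)
     else
       tensor_list (replicate (j div 2 - 1) Em @ [g2] @ replicate (m - j div 2) Tm))"

definition mat_vec :: "nat \<Rightarrow> cmat \<Rightarrow> cvec \<Rightarrow> cvec" where
  "mat_vec d M a = (\<lambda>i. \<Sum>k<d. M i k * a k)"

definition herm :: "nat \<Rightarrow> cvec \<Rightarrow> cvec \<Rightarrow> complex" where
  "herm d u v = (\<Sum>k<d. u k * cnj (v k))"

definition sqnorm :: "nat \<Rightarrow> cvec \<Rightarrow> real" where
  "sqnorm d a = (\<Sum>k<d. (cmod (a k))^2)"

text \<open>A vector of R^{n,1} is given by its e_0-component t and spatial components x 1, ..., x n.
  Future-directed null: sum x_j^2 - t^2 = 0, (t,x) nonzero, t > 0.\<close>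
definition future_null :: "nat \<Rightarrow> real \<Rightarrow> (nat \<Rightarrow> real) \<Rightarrow> bool" where
  "future_null n t x \<longleftrightarrow> (\<Sum>j=1..n. (x j)^2) - t^2 = 0 \<and> (t \<noteq> 0 \<or> (\<exists>j\<in>{1..n}. x j \<noteq> 0)) \<and> t > 0"

end

theory Submission
  imports Defs
begin

text \<open>For n = 2m + 3, Baum's matrices arise from those for 2m + 1 by one more tensor factor:
  c(e_1), c(e_2), c(e_n) are g1, g2, iT tensored with T^m, and c(e_(j+2)) is E tensored with the
  old c(e_j). Hence for a product spinor a = v \<otimes> b the middle components of zeta_a are |v|^2 times
  the components of zeta_b, while its components 1, 2, n are the Hopf map of v times the last
  component s of zeta_b. The Hopf map sends the unit sphere of C^2 onto the unit sphere of R^3, so a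
  unit v realises any (x_1, x_2, x_n) of length |s|. Induction on m, starting from a
  one-dimensional spinor with zeta = -t, handles odd n; even n is the odd case with x_(n+1) = 0.\<close>

lemma sum_lessThan_mult:
  fixes f :: "nat \<Rightarrow> 'a::comm_monoid_add"
  shows "(\<Sum>k<p * q. f k) = (\<Sum>i<p. \<Sum>j<q. f (i * q + j))"
proof -
  have "(\<Sum>k<p * q. f k) = (\<Sum>i<p. sum f {i * q..<i * q + q})"
    by (rule sum.nat_group[symmetric])
  also have "\<dots> = (\<Sum>i<p. \<Sum>j<q. f (i * q + j))"
    by (simp add: sum.shift_bounds_nat_ivl[of f 0 "_ * q" q, simplified] atLeast0LessThan add.commute)
  finally show ?thesis .
qed

lemma sum_lessThan_mult_div_mod:
  fixes q :: nat and f :: "nat \<Rightarrow> nat \<Rightarrow> 'a::comm_monoid_add"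
  assumes "0 < q"
  shows "(\<Sum>k<p * q. f (k div q) (k mod q)) = (\<Sum>i<p. \<Sum>j<q. f i j)"
  unfolding sum_lessThan_mult
proof (intro sum.cong refl)
  fix i j assume "j \<in> {..<q}"
  then show "f ((i * q + j) div q) ((i * q + j) mod q) = f i j"
    using assms by simp
qed

lemma sum_atLeastAtMost_drop_two:
  fixes f :: "nat \<Rightarrow> 'a::comm_monoid_add"
  shows "(\<Sum>j=1..k + 2. f j) = f 1 + f 2 + (\<Sum>j=1..k. f (j + 2))"
proof (induction k)
  case 0
  show ?case by (simp add: numeral_2_eq_2)
next
  case (Suc k)
  then show ?case by (simp add: sum.cl_ivl_Suc add.assoc)
qed

definition kron_vec :: "nat \<Rightarrow> cvec \<Rightarrow> cvec \<Rightarrow> cvec" where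
  "kron_vec q v b = (\<lambda>i. v (i div q) * b (i mod q))"

lemma mat_vec_kron:
  assumes "0 < q"
  shows "mat_vec (p * q) (kron q A B) (kron_vec q v b) = kron_vec q (mat_vec p A v) (mat_vec q B b)"
proof
  fix i
  have "mat_vec (p * q) (kron q A B) (kron_vec q v b) i
      = (\<Sum>k<p. \<Sum>l<q. (A (i div q) k * v k) * (B (i mod q) l * b l))"
    unfolding mat_vec_def kron_def kron_vec_def
    using sum_lessThan_mult_div_mod[OF assms, where p = p
        and f = "\<lambda>k l. A (i div q) k * B (i mod q) l * (v k * b l)"]
    by (simp add: algebra_simps)
  then show "mat_vec (p * q) (kron q A B) (kron_vec q v b) i = kron_vec q (mat_vec p A v) (mat_vec q B b) i"
    unfolding mat_vec_def kron_vec_def by (simp add: sum_product)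
qed

lemma herm_kron_vec:
  assumes "0 < q"
  shows "herm (p * q) (kron_vec q u w) (kron_vec q v b) = herm p u v * herm q w b"
proof -
  have "herm (p * q) (kron_vec q u w) (kron_vec q v b)
      = (\<Sum>k<p. \<Sum>l<q. (u k * cnj (v k)) * (w l * cnj (b l)))"
    unfolding herm_def kron_vec_def
    using sum_lessThan_mult_div_mod[OF assms, where p = p and f = "\<lambda>k l. u k * w l * cnj (v k * b l)"]
    by (simp add: algebra_simps)
  then show ?thesis
    unfolding herm_def by (simp add: sum_product)
qed

definition qform :: "nat \<Rightarrow> cmat \<Rightarrow> cvec \<Rightarrow> complex" where
  "qform d M a = herm d (mat_vec d M a) a"

lemma qform_kron:
  assumes "0 < q"
  shows "qform (p * q) (kron q A B) (kron_vec q v b) = qform p A v * qform q B b"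
  unfolding qform_def using assms by (simp add: mat_vec_kron herm_kron_vec)

lemma mat_vec_scale: "mat_vec d (\<lambda>i j. c * M i j) a = (\<lambda>i. c * mat_vec d M a i)"
  unfolding mat_vec_def by (simp add: sum_distrib_left mult.assoc)

lemma herm_scale_left: "herm d (\<lambda>i. c * u i) v = c * herm d u v"
  unfolding herm_def by (simp add: sum_distrib_left mult.assoc)

lemma qform_scale: "qform d (\<lambda>i j. c * M i j) a = c * qform d M a"
  unfolding qform_def mat_vec_scale herm_scale_left ..

lemma qform_2:
  fixes v :: cvec
  shows "qform 2 g1 v = \<i> * (v 0 * cnj (v 0) - v 1 * cnj (v 1))"
    and "qform 2 g2 v = \<i> * (v 0 * cnj (v 1) + v 1 * cnj (v 0))"
    and "qform 2 Tm v = \<i> * (v 0 * cnj (v 1) - v 1 * cnj (v 0))"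
    and "qform 2 Em v = v 0 * cnj (v 0) + v 1 * cnj (v 1)"
  unfolding qform_def herm_def mat_vec_def g1_def g2_def Tm_def Em_def mat2_def
  by (simp_all add: numeral_2_eq_2 lessThan_Suc algebra_simps)

lemma sqnorm_eq_herm: "complex_of_real (sqnorm d a) = herm d a a"
  unfolding sqnorm_def herm_def of_real_sum by (simp add: complex_norm_square[symmetric])

lemma sqnorm_kron_vec:
  "complex_of_real (sqnorm (2 * 2 ^ m) (kron_vec (2 ^ m) v b))
     = (v 0 * cnj (v 0) + v 1 * cnj (v 1)) * complex_of_real (sqnorm (2 ^ m) b)"
  unfolding sqnorm_eq_herm herm_kron_vec[of "2 ^ m", OF zero_less_power, simplified]
  by (simp add: herm_def numeral_2_eq_2 lessThan_Suc)

definition zeta :: "nat \<Rightarrow> nat \<Rightarrow> cvec \<Rightarrow> complex" where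
  "zeta n j a = herm (2 ^ (n div 2)) (mat_vec (2 ^ (n div 2)) (\<lambda>p q. \<i> * cliff n j p q) a) a"

lemma zeta_eq_qform: "zeta n j a = \<i> * qform (2 ^ (n div 2)) (cliff n j) a"
  unfolding zeta_def qform_def mat_vec_scale herm_scale_left ..

abbreviation T_power :: "nat \<Rightarrow> cmat" where
  "T_power m \<equiv> tensor_list (replicate m Tm)"

lemma cliff_odd_last: "cliff (2 * m + 1) (2 * m + 1) = (\<lambda>p q. \<i> * T_power m p q)"
  unfolding cliff_def Let_def by simp

lemma cliff_Suc_1: "cliff (2 * m + 3) 1 = kron (2 ^ m) g1 (T_power m)"
  unfolding cliff_def Let_def by simp

lemma cliff_Suc_2: "cliff (2 * m + 3) 2 = kron (2 ^ m) g2 (T_power m)"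
  unfolding cliff_def Let_def by simp

lemma cliff_Suc_last: "cliff (2 * m + 3) (2 * m + 3) = (\<lambda>p q. \<i> * kron (2 ^ m) Tm (T_power m) p q)"
proof -
  have "(2 * m + 3) div 2 = Suc m" by simp
  then show ?thesis unfolding cliff_def Let_def by simp
qed

lemma cliff_Suc_shift:
  assumes "1 \<le> j" "j \<le> 2 * m"
  shows "cliff (2 * m + 3) (j + 2) = kron (2 ^ m) Em (cliff (2 * m + 1) j)"
proof -
  have n: "(2 * m + 3) div 2 = Suc m" "(2 * m + 1) div 2 = m" by simp_all
  have j: "j + 2 \<noteq> 2 * m + 3" "j \<noteq> 2 * m + 1" using assms by auto
  show ?thesis
  proof (cases "odd j")
    case True
    define k where "k = j div 2"
    have k: "j = 2 * k + 1" using True unfolding k_def by presburger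
    have "odd (j + 2)" using True by simp
    moreover have "(j + 2 + 1) div 2 = Suc (Suc k)" "(j + 1) div 2 = Suc k" using k by simp_all
    moreover have "length (replicate k Em @ [g1] @ replicate (m - Suc k) Tm) = m"
      using assms k by simp
    moreover have "Suc m - Suc (Suc k) = m - Suc k" by simp
    ultimately show ?thesis unfolding cliff_def Let_def n using j True by simp
  next
    case False
    define k where "k = j div 2 - 1"
    have k: "j = 2 * k + 2" using False assms unfolding k_def by presburger
    have "even (j + 2)" using False by simp
    moreover have "(j + 2) div 2 = Suc (Suc k)" "j div 2 = Suc k" using k by simp_all
    moreover have "length (replicate k Em @ [g2] @ replicate (m - Suc k) Tm) = m"
      using assms k by simp
    moreover have "Suc m - Suc (Suc k) = m - Suc k" by simp
    ultimately show ?thesis unfolding cliff_def Let_def n using j False by simp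
  qed
qed

lemma cliff_even_eq_odd:
  assumes "j \<le> 2 * m + 2"
  shows "cliff (2 * m + 2) j = cliff (2 * m + 3) j"
proof -
  have "(2 * m + 2) div 2 = Suc m" "(2 * m + 3) div 2 = Suc m" by simp_all
  then show ?thesis unfolding cliff_def Let_def using assms by simp
qed

lemma zeta_kron_vec:
  fixes m :: nat and v b :: cvec
  defines "a \<equiv> kron_vec (2 ^ m) v b" and "s \<equiv> zeta (2 * m + 1) (2 * m + 1) b"
  shows "zeta (2 * m + 3) 1 a = (v 0 * cnj (v 0) - v 1 * cnj (v 1)) * s"
    and "zeta (2 * m + 3) 2 a = (v 0 * cnj (v 1) + v 1 * cnj (v 0)) * s"
    and "zeta (2 * m + 3) (2 * m + 3) a = \<i> * (v 0 * cnj (v 1) - v 1 * cnj (v 0)) * s"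
    and "1 \<le> j \<Longrightarrow> j \<le> 2 * m \<Longrightarrow>
           zeta (2 * m + 3) (j + 2) a = (v 0 * cnj (v 0) + v 1 * cnj (v 1)) * zeta (2 * m + 1) j b"
proof -
  have dim: "(2::nat) ^ ((2 * m + 3) div 2) = 2 * 2 ^ m" "(2 * m + 1) div 2 = m"
    by (simp_all add: numeral_3_eq_3)
  have kron: "qform (2 * 2 ^ m) (kron (2 ^ m) A B) a = qform 2 A v * qform (2 ^ m) B b" for A B
    unfolding a_def by (simp add: qform_kron)
  have s: "s = - qform (2 ^ m) (T_power m) b"
    unfolding s_def zeta_eq_qform dim cliff_odd_last qform_scale by simp
  show "zeta (2 * m + 3) 1 a = (v 0 * cnj (v 0) - v 1 * cnj (v 1)) * s"
    unfolding zeta_eq_qform dim cliff_Suc_1 kron qform_2 s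
    by (simp add: complex_i_mult_minus mult.assoc)
  show "zeta (2 * m + 3) 2 a = (v 0 * cnj (v 1) + v 1 * cnj (v 0)) * s"
    unfolding zeta_eq_qform dim cliff_Suc_2 kron qform_2 s
    by (simp add: complex_i_mult_minus mult.assoc)
  show "zeta (2 * m + 3) (2 * m + 3) a = \<i> * (v 0 * cnj (v 1) - v 1 * cnj (v 0)) * s"
    unfolding zeta_eq_qform dim cliff_Suc_last qform_scale kron qform_2 s
    by (simp add: complex_i_mult_minus mult.assoc)
  show "zeta (2 * m + 3) (j + 2) a = (v 0 * cnj (v 0) + v 1 * cnj (v 1)) * zeta (2 * m + 1) j b"
    if "1 \<le> j" "j \<le> 2 * m"
    unfolding zeta_eq_qform dim cliff_Suc_shift[OF that] kron qform_2 by simp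
qed

lemma hopf_map_onto_cone:
  fixes p q u r :: real
  assumes "r \<ge> 0" and "p\<^sup>2 + q\<^sup>2 + u\<^sup>2 = r\<^sup>2"
  obtains v0 v1 :: complex
  where "v0 * cnj v0 - v1 * cnj v1 = p" and "v0 * cnj v1 + v1 * cnj v0 = q"
    and "\<i> * (v0 * cnj v1 - v1 * cnj v0) = u" and "v0 * cnj v0 + v1 * cnj v1 = r"
proof (cases "r + p = 0")
  case True
  then have "q\<^sup>2 + u\<^sup>2 = 0" using assms(2) by (simp add: eq_neg_iff_add_eq_0[symmetric])
  then have "q = 0" "u = 0" by (simp_all add: sum_power2_eq_zero_iff)
  with True assms(1) show ?thesis
    by (intro that[of 0 "of_real (sqrt r)"]) (simp_all add: complex_eq_iff power2_eq_square[symmetric])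
next
  case False
  have "p\<^sup>2 \<le> r\<^sup>2" using assms(2) by (smt (verit) zero_le_power2)
  then have "\<bar>p\<bar> \<le> r" using assms(1) by (metis abs_le_square_iff abs_of_nonneg)
  with False have rp: "r + p > 0" by linarith
  define c where "c = sqrt ((r + p) / 2)"
  have c: "c > 0" "c\<^sup>2 = (r + p) / 2" using rp unfolding c_def by simp_all
  have qu: "q\<^sup>2 + u\<^sup>2 = (r - p) * (r + p)"
    using assms(2) by (simp add: algebra_simps power2_eq_square)
  have "(q / (2 * c))\<^sup>2 + (u / (2 * c))\<^sup>2 = (q\<^sup>2 + u\<^sup>2) / (4 * c\<^sup>2)"
    by (simp add: power_divide add_divide_distrib power_mult_distrib)
  also have "\<dots> = (r - p) * (r + p) / (2 * (r + p))"
    using qu c(2) by simp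
  also have "\<dots> = (r - p) / 2"
    using rp by (simp add: field_simps)
  finally have e: "(q / (2 * c))\<^sup>2 + (u / (2 * c))\<^sup>2 = (r - p) / 2" .
  show ?thesis
  proof (rule that[of "of_real c" "Complex (q / (2 * c)) (u / (2 * c))"])
  qed (use c e in \<open>simp_all add: complex_eq_iff power2_eq_square[symmetric] algebra_simps\<close>)
qed

lemma obtain_unit_direction:
  fixes y1 y2 y3 s :: real
  assumes "y1\<^sup>2 + y2\<^sup>2 + y3\<^sup>2 = s\<^sup>2"
  obtains p q u where "p\<^sup>2 + q\<^sup>2 + u\<^sup>2 = 1" and "y1 = s * p" and "y2 = s * q" and "y3 = s * u"
proof (cases "s = 0")
  case True
  with assms have "y1 = 0 \<and> y2 = 0 \<and> y3 = 0"
    by (smt (verit) zero_le_power2 power_zero_numeral zero_eq_power2)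
  with True show ?thesis by (intro that[of 1 0 0]) simp_all
next
  case False
  have "(y1 / s)\<^sup>2 + (y2 / s)\<^sup>2 + (y3 / s)\<^sup>2 = (y1\<^sup>2 + y2\<^sup>2 + y3\<^sup>2) / s\<^sup>2"
    by (simp add: power_divide add_divide_distrib)
  with assms False show ?thesis by (intro that[of "y1 / s" "y2 / s" "y3 / s"]) simp_all
qed

lemma zeta_lift:
  fixes b :: cvec and x :: "nat \<Rightarrow> real" and s :: real
  assumes inner: "\<forall>j\<in>{1..2 * m}. zeta (2 * m + 1) j b = x (j + 2)"
    and last_coord: "zeta (2 * m + 1) (2 * m + 1) b = s"
    and outer: "(x 1)\<^sup>2 + (x 2)\<^sup>2 + (x (2 * m + 3))\<^sup>2 = s\<^sup>2"
  shows "\<exists>a. (\<forall>j\<in>{1..2 * m + 3}. zeta (2 * m + 3) j a = x j)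
           \<and> sqnorm (2 ^ ((2 * m + 3) div 2)) a = sqnorm (2 ^ m) b"
proof -
  obtain p q u where "p\<^sup>2 + q\<^sup>2 + u\<^sup>2 = 1"
    and x: "x 1 = s * p" "x 2 = s * q" "x (2 * m + 3) = s * u"
    using obtain_unit_direction[OF outer] .
  then obtain v0 v1 where v: "v0 * cnj v0 - v1 * cnj v1 = p" "v0 * cnj v1 + v1 * cnj v0 = q"
    "\<i> * (v0 * cnj v1 - v1 * cnj v0) = u" "v0 * cnj v0 + v1 * cnj v1 = 1"
    using hopf_map_onto_cone[of 1 p q u] by auto
  define v :: cvec where "v = (\<lambda>k. if k = 0 then v0 else v1)"
  have v01: "v 0 = v0" "v 1 = v1" unfolding v_def by simp_all
  note zeta = zeta_kron_vec[where m = m and v = v and b = b, unfolded v01 last_coord v]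
  define a where "a = kron_vec (2 ^ m) v b"
  have xc: "complex_of_real (x 1) = of_real p * of_real s" "complex_of_real (x 2) = of_real q * of_real s"
    "complex_of_real (x (2 * m + 3)) = of_real u * of_real s"
    unfolding x by (simp_all add: mult.commute)
  have "zeta (2 * m + 3) j a = x j" if j: "j \<in> {1..2 * m + 3}" for j
  proof -
    consider "j = 1" | "j = 2" | "j = 2 * m + 3" | "1 \<le> j - 2" "j - 2 \<le> 2 * m" "j = j - 2 + 2"
      using j by fastforce
    then show ?thesis
    proof cases
      case 1
      show ?thesis unfolding 1 a_def zeta(1) xc ..
    next
      case 2
      show ?thesis unfolding 2 a_def zeta(2) xc ..
    next
      case 3
      show ?thesis unfolding 3 a_def zeta(3) xc ..
    next
      case 4
      then have "zeta (2 * m + 3) (j - 2 + 2) a = x (j - 2 + 2)"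
        unfolding a_def zeta(4)[OF 4(1,2)] using inner by simp
      then show ?thesis using 4(3) by simp
    qed
  qed
  moreover have "sqnorm (2 ^ ((2 * m + 3) div 2)) a = sqnorm (2 ^ m) b"
    using sqnorm_kron_vec[where m = m and v = v and b = b] unfolding a_def v01 v(4)
    by (simp add: numeral_3_eq_3)
  ultimately show ?thesis by blast
qed

lemma zeta_onto_null_odd:
  fixes x :: "nat \<Rightarrow> real"
  assumes "(\<Sum>j=1..2 * m + 3. (x j)\<^sup>2) = t\<^sup>2" and "t \<ge> 0"
  shows "\<exists>a. (\<forall>j\<in>{1..2 * m + 3}. zeta (2 * m + 3) j a = x j)
           \<and> sqnorm (2 ^ ((2 * m + 3) div 2)) a = t"
  using assms
proof (induction m arbitrary: t x)
  case 0
  define b :: cvec where "b = (\<lambda>_. of_real (sqrt t))"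
  have "zeta 1 1 b = \<i> * (\<i> * (b 0 * cnj (b 0)))"
    unfolding zeta_eq_qform using cliff_odd_last[of 0]
    by (simp add: qform_scale qform_def herm_def mat_vec_def)
  also have "\<dots> = - t"
    using 0(2) by (simp add: b_def flip: of_real_mult)
  finally have "zeta 1 1 b = - t" .
  moreover have "(x 1)\<^sup>2 + (x 2)\<^sup>2 + (x 3)\<^sup>2 = (- t)\<^sup>2"
    using 0(1) by (simp add: numeral_3_eq_3 numeral_2_eq_2)
  moreover have "sqnorm 1 b = t"
    using 0(2) unfolding sqnorm_def b_def by simp
  ultimately show ?case
    using zeta_lift[where m = 0 and b = b and x = x and s = "- t"] by simp
next
  case (Suc m)
  have n: "2 * Suc m = 2 * m + 2" "2 * m + 2 + 1 = 2 * m + 3" "2 * Suc m + 3 = (2 * m + 3) + 2"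
    "(2 * m + 3) div 2 = Suc m"
    by simp_all
  define s where "s = sqrt ((x 1)\<^sup>2 + (x 2)\<^sup>2 + (x (2 * m + 5))\<^sup>2)"
  have s2: "s\<^sup>2 = (x 1)\<^sup>2 + (x 2)\<^sup>2 + (x (2 * m + 5))\<^sup>2"
    unfolding s_def by simp
  define y where "y = (\<lambda>j. if j = 2 * m + 3 then s else x (j + 2))"
  have "(\<Sum>j=1..2 * m + 3. (y j)\<^sup>2) = (\<Sum>j=1..2 * m + 2. (y j)\<^sup>2) + s\<^sup>2"
    by (simp add: y_def numeral_3_eq_3)
  also have "(\<Sum>j=1..2 * m + 2. (y j)\<^sup>2) = (\<Sum>j=1..2 * m + 2. (x (j + 2))\<^sup>2)"
    by (rule sum.cong) (simp_all add: y_def)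
  also have "\<dots> + s\<^sup>2 = (\<Sum>j=1..2 * Suc m + 3. (x j)\<^sup>2)"
  proof -
    have "(\<Sum>j=1..2 * m + 3. (x (j + 2))\<^sup>2) = (\<Sum>j=1..2 * m + 2. (x (j + 2))\<^sup>2) + (x (2 * m + 5))\<^sup>2"
      by (simp add: eval_nat_numeral)
    then show ?thesis
      unfolding n(3) sum_atLeastAtMost_drop_two s2 by simp
  qed
  finally obtain b where b: "\<forall>j\<in>{1..2 * m + 3}. zeta (2 * m + 3) j b = y j"
    and t: "sqnorm (2 ^ Suc m) b = t"
    using Suc.IH[where x = y and t = t] Suc.prems unfolding n(4) by auto
  have "\<forall>j\<in>{1..2 * Suc m}. zeta (2 * Suc m + 1) j b = x (j + 2)"
    unfolding n(1,2)
  proof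
    fix j assume "j \<in> {1..2 * m + 2}"
    then have "j \<in> {1..2 * m + 3}" "j \<noteq> 2 * m + 3" by auto
    then show "zeta (2 * m + 3) j b = x (j + 2)"
      using bspec[OF b, of j] by (simp add: y_def)
  qed
  moreover have "zeta (2 * Suc m + 1) (2 * Suc m + 1) b = s"
    using bspec[OF b, of "2 * m + 3"] unfolding n(1,2) by (simp add: y_def)
  moreover have "(x 1)\<^sup>2 + (x 2)\<^sup>2 + (x (2 * Suc m + 3))\<^sup>2 = s\<^sup>2"
    unfolding s2 by (simp add: add.commute)
  ultimately show ?case
    using zeta_lift[where m = "Suc m" and b = b and x = x and s = s] t by simp
qed

lemma zeta_even_eq_odd:
  assumes "j \<le> 2 * m + 2"
  shows "zeta (2 * m + 2) j = zeta (2 * m + 3) j"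
proof -
  have "(2 * m + 2) div 2 = (2 * m + 3) div 2" by simp
  then show ?thesis
    unfolding zeta_def cliff_even_eq_odd[OF assms] by simp
qed

lemma zeta_onto_null_even:
  fixes x :: "nat \<Rightarrow> real"
  assumes "(\<Sum>j=1..2 * m + 2. (x j)\<^sup>2) = t\<^sup>2" and "t \<ge> 0"
  shows "\<exists>a. (\<forall>j\<in>{1..2 * m + 2}. zeta (2 * m + 2) j a = x j)
           \<and> sqnorm (2 ^ ((2 * m + 2) div 2)) a = t"
proof -
  define y where "y = x(2 * m + 3 := 0)"
  have "(\<Sum>j=1..2 * m + 3. (y j)\<^sup>2) = (\<Sum>j=1..2 * m + 2. (y j)\<^sup>2)"
    by (simp add: y_def numeral_3_eq_3)
  also have "\<dots> = t\<^sup>2"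
    using assms(1) by (simp add: y_def)
  finally obtain a where a: "\<forall>j\<in>{1..2 * m + 3}. zeta (2 * m + 3) j a = y j"
    and t: "sqnorm (2 ^ ((2 * m + 3) div 2)) a = t"
    using zeta_onto_null_odd assms(2) by blast
  have "zeta (2 * m + 2) j a = x j" if "j \<in> {1..2 * m + 2}" for j
    using that bspec[OF a, of j] zeta_even_eq_odd[of j m] by (simp add: y_def)
  moreover have "(2 * m + 2) div 2 = (2 * m + 3) div 2" by simp
  ultimately show ?thesis using t by (intro exI[of _ a]) simp
qed

theorem proposition2p4:
  fixes n :: nat and t :: real and x :: "nat \<Rightarrow> real"
  assumes "n \<ge> 2"
    and "future_null n t x"
  shows "\<exists>a :: cvec.
           (\<forall>j\<in>{1..n}. complex_of_real (x j)
                = herm (2 ^ (n div 2)) (mat_vec (2 ^ (n div 2)) (\<lambda>p q. \<i> * cliff n j p q) a) a)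
         \<and> t = sqnorm (2 ^ (n div 2)) a"
proof -
  from assms(2) have null: "(\<Sum>j=1..n. (x j)\<^sup>2) = t\<^sup>2" and "t \<ge> 0"
    unfolding future_null_def by auto
  have "n = 2 * ((n - 2) div 2) + 2 \<or> n = 2 * ((n - 2) div 2) + 3"
    using assms(1) by presburger
  then obtain a where "\<forall>j\<in>{1..n}. zeta n j a = x j" and "sqnorm (2 ^ (n div 2)) a = t"
    using zeta_onto_null_even zeta_onto_null_odd null \<open>t \<ge> 0\<close> by metis
  then show ?thesis
    unfolding zeta_def by (intro exI[of _ a]) simp
qed

end
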